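(* Let $n\in\mathbb N$, $\alpha>0$ and $1<p<\infty$. For every multi-index $\mathbf j=(j_1,\dots,j_n)\in(\mathbb N\cup\{0\})^n$, \[ P^n_\alpha G^n_{p,\alpha}(\psi_{\mathbf j,\alpha})=\left(\frac2p\right)^{|\mathbf j|p/2+n}\frac{\prod_{k=1}^n\Gamma(j_kp/2+1)}{\sqrt{\mathbf j!}^{\,p}}\,\psi_{\mathbf j,\alpha}. \] In particular, there is a constant $K_{\mathbf j,p,\alpha}$ such that $P^n_\alpha G^n_{p,\alpha}(\psi_{\mathbf j,\alpha})(z)=K_{\mathbf j,p,\alpha}z^{\mathbf j}$.
   Context: For $\alpha>0$, $\gamma^n_\alpha(dz)=(\alpha/\pi)^n e^{-\alpha|z|^2}\lambda^n(dz)$ on $\mathbb C^n$. $\psi_{\mathbf j,\alpha}(z)=\sqrt{\alpha^{|\mathbf j|}/\mathbf j!}\,z^{\mathbf j}$, with $|\mathbf j|=j_1+\dots+j_n$, $\mathbf j!=j_1!\cdots j_n!$, $z^{\mathbf j}=z_1^{j_1}\cdots z_n^{j_n}$. For a function $h$, $G^n_{p,\alpha}(h)(z)=|h(z)|^{p-2}h(z)e^{-\alpha(\frac p2-1)|z|^2}$ (taken to be $0$ where $h(z)=0$). $P^n_\alpha$ is the integral operator $(P^n_\alpha f)(z)=\int_{\mathbb C^n}e^{\alpha\langle z,w\rangle}f(w)\,\gamma^n_\alpha(dw)$, $\langle z,w\rangle=\sum_kz_k\overline{w_k}$. *)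

theory Defs
  imports "HOL-Analysis.Analysis"
begin

text \<open>C^n is modelled as complex ^ 'n for a finite index type 'n, n = CARD('n).
  Lebesgue measure on C^n = lborel on complex ^ 'n (identified with R^(2n)).
  Multi-indices are functions 'n => nat.\<close>

definition gauss_measure :: "real \<Rightarrow> (complex ^ 'n) measure" where
  "gauss_measure \<alpha> = density lborel
     (\<lambda>z. ennreal ((\<alpha> / pi) ^ CARD('n) * exp (- \<alpha> * (norm z)\<^sup>2)))"

definition mabs :: "('n::finite \<Rightarrow> nat) \<Rightarrow> nat" where
  "mabs j = (\<Sum>k\<in>UNIV. j k)"

definition mfact :: "('n::finite \<Rightarrow> nat) \<Rightarrow> nat" where
  "mfact j = (\<Prod>k\<in>UNIV. fact (j k))"

definition mpow :: "complex ^ 'n \<Rightarrow> ('n::finite \<Rightarrow> nat) \<Rightarrow> complex" where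
  "mpow z j = (\<Prod>k\<in>UNIV. (z $ k) ^ (j k))"

definition psi :: "('n::finite \<Rightarrow> nat) \<Rightarrow> real \<Rightarrow> complex ^ 'n \<Rightarrow> complex" where
  "psi j \<alpha> z = complex_of_real (sqrt (\<alpha> ^ mabs j / real (mfact j))) * mpow z j"

definition Gop :: "real \<Rightarrow> real \<Rightarrow> (complex ^ 'n \<Rightarrow> complex) \<Rightarrow> complex ^ 'n \<Rightarrow> complex" where
  "Gop p \<alpha> h z = (if h z = 0 then 0 else
     complex_of_real (norm (h z) powr (p - 2) * exp (- \<alpha> * (p / 2 - 1) * (norm z)\<^sup>2)) * h z)"

definition cinner :: "complex ^ 'n \<Rightarrow> complex ^ 'n \<Rightarrow> complex" where
  "cinner z w = (\<Sum>k\<in>UNIV. z $ k * cnj (w $ k))"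

definition Pop :: "real \<Rightarrow> (complex ^ 'n \<Rightarrow> complex) \<Rightarrow> complex ^ 'n \<Rightarrow> complex" where
  "Pop \<alpha> f z = (\<integral>w. exp (complex_of_real \<alpha> * cinner z w) * f w \<partial>(gauss_measure \<alpha>))"

end

theory Submission
  imports Defs
begin

text \<open>
  Write \<open>\<psi> = c z^j\<close>. Wherever \<open>\<psi> \<noteq> 0\<close>,
  \<open>G(\<psi>)(w) = c^(p-1) exp(-\<alpha>(p/2-1)|w|\<^sup>2) \<Prod>\<^sub>k |w\<^sub>k|^(j\<^sub>k(p-2)) w\<^sub>k^j\<^sub>k\<close>, so after multiplying
  by \<open>exp(\<alpha>\<langle>z,w\<rangle>)\<close> and the Gaussian density the integrand defining \<open>P G(\<psi>)(z)\<close> factors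
  over the coordinates, and by Fubini the integral over \<open>\<complex>^n\<close> is a product of integrals over
  \<open>\<complex>\<close>. In one variable, expand \<open>exp(\<alpha> \<zeta> cnj w)\<close> into its power series and integrate
  termwise: since Lebesgue measure on \<open>\<complex>\<close> is rotation invariant, the integral of
  \<open>cnj w^k w^m\<close> against a radial weight vanishes for \<open>k \<noteq> m\<close>, and the diagonal term is a
  radial integral, which the substitution \<open>t = |w|\<^sup>2\<close> turns into a Gamma integral.
\<close>

section \<open>Rotation invariance of Lebesgue measure on \<open>\<complex>\<close>\<close>

lemma measurable_Complex [measurable]:
  "(\<lambda>(x, y). Complex x y) \<in> borel_measurable (lborel \<Otimes>\<^sub>M lborel)"
proof -
  have "(\<lambda>(x, y). Complex x y) = (\<lambda>xy. of_real (fst xy) + \<i> * of_real (snd xy))"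
    by (auto simp: fun_eq_iff complex_eq_iff)
  also have "\<dots> \<in> borel_measurable (lborel \<Otimes>\<^sub>M lborel)" by measurable
  finally show ?thesis .
qed

lemma measurable_cnj [measurable]: "cnj \<in> borel_measurable borel"
  by (intro borel_measurable_continuous_onI continuous_on_cnj continuous_on_id)

lemma lborel_complex_eq_distr_pair:
  "(lborel :: complex measure) = distr (lborel \<Otimes>\<^sub>M lborel) borel (\<lambda>(x, y). Complex x y)"
proof (rule lborel_eqI)
  fix l u :: complex
  assume le: "\<And>b. b \<in> Basis \<Longrightarrow> l \<bullet> b \<le> u \<bullet> b"
  have "Re l \<le> Re u" "Im l \<le> Im u" using le[of 1] le[of \<i>] by (auto simp: Basis_complex_def)
  have box: "(\<lambda>(x, y). Complex x y) -` box l u \<inter> space (lborel \<Otimes>\<^sub>M lborel)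
      = {Re l<..<Re u} \<times> {Im l<..<Im u}"
    by (auto simp: mem_box Basis_complex_def space_pair_measure)
  have "emeasure (distr (lborel \<Otimes>\<^sub>M lborel) borel (\<lambda>(x, y). Complex x y)) (box l u)
      = ennreal ((Re u - Re l) * (Im u - Im l))"
    using \<open>Re l \<le> Re u\<close> \<open>Im l \<le> Im u\<close>
    by (simp add: emeasure_distr box lborel.emeasure_pair_measure_Times ennreal_mult)
  then show "emeasure (distr (lborel \<Otimes>\<^sub>M lborel) borel (\<lambda>(x, y). Complex x y)) (box l u)
      = (\<Prod>b\<in>Basis. (u - l) \<bullet> b)"
    by (simp add: Basis_complex_def)
qed simp

lemma nn_integral_lborel_complex:
  fixes f :: "complex \<Rightarrow> ennreal"
  assumes [measurable]: "f \<in> borel_measurable borel"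
  shows "(\<integral>\<^sup>+w. f w \<partial>lborel) = (\<integral>\<^sup>+y. (\<integral>\<^sup>+x. f (Complex x y) \<partial>lborel) \<partial>lborel)"
    and "(\<integral>\<^sup>+w. f w \<partial>lborel) = (\<integral>\<^sup>+x. (\<integral>\<^sup>+y. f (Complex x y) \<partial>lborel) \<partial>lborel)"
proof -
  have pair: "(\<integral>\<^sup>+w. f w \<partial>lborel) = (\<integral>\<^sup>+xy. f (Complex (fst xy) (snd xy)) \<partial>(lborel \<Otimes>\<^sub>M lborel))"
    by (subst lborel_complex_eq_distr_pair) (simp add: nn_integral_distr case_prod_beta)
  show "(\<integral>\<^sup>+w. f w \<partial>lborel) = (\<integral>\<^sup>+y. (\<integral>\<^sup>+x. f (Complex x y) \<partial>lborel) \<partial>lborel)"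
    unfolding pair by (subst lborel_pair.nn_integral_snd[symmetric]) auto
  show "(\<integral>\<^sup>+w. f w \<partial>lborel) = (\<integral>\<^sup>+x. (\<integral>\<^sup>+y. f (Complex x y) \<partial>lborel) \<partial>lborel)"
    unfolding pair by (subst lborel.nn_integral_fst[symmetric]) auto
qed

lemma distr_eq_self_if_nn_integral_invariant:
  assumes S [measurable]: "S \<in> M \<rightarrow>\<^sub>M M"
    and invariant: "\<And>f. f \<in> borel_measurable M \<Longrightarrow> (\<integral>\<^sup>+x. f (S x) \<partial>M) = (\<integral>\<^sup>+x. f x \<partial>M)"
  shows "distr M M S = M"
proof (rule measure_eqI)
  fix A assume "A \<in> sets (distr M M S)"
  then have [measurable]: "A \<in> sets M" by simp
  have "emeasure (distr M M S) A = emeasure M (S -` A \<inter> space M)"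
    by (rule emeasure_distr) auto
  also have "\<dots> = (\<integral>\<^sup>+x. indicator (S -` A \<inter> space M) x \<partial>M)"
    using measurable_sets[OF S \<open>A \<in> sets M\<close>] by simp
  also have "\<dots> = (\<integral>\<^sup>+x. indicator A (S x) \<partial>M)"
    by (rule nn_integral_cong) (simp add: indicator_def)
  also have "\<dots> = emeasure M A"
    by (simp add: invariant)
  finally show "emeasure (distr M M S) A = emeasure M A" .
qed simp

definition shear_Re :: "real \<Rightarrow> complex \<Rightarrow> complex" where
  "shear_Re a w = Complex (Re w + a * Im w) (Im w)"

definition shear_Im :: "real \<Rightarrow> complex \<Rightarrow> complex" where
  "shear_Im a w = Complex (Re w) (Im w + a * Re w)"

lemma measurable_shear_Re [measurable]: "shear_Re a \<in> borel_measurable borel"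
  unfolding shear_Re_def Complex_eq by measurable

lemma measurable_shear_Im [measurable]: "shear_Im a \<in> borel_measurable borel"
  unfolding shear_Im_def Complex_eq by measurable

lemma distr_lborel_shear_Re: "distr lborel lborel (shear_Re a) = lborel"
proof (rule distr_eq_self_if_nn_integral_invariant)
  fix f :: "complex \<Rightarrow> ennreal" assume [measurable]: "f \<in> borel_measurable lborel"
  have "(\<integral>\<^sup>+x. f (Complex (a * y + 1 * x) y) \<partial>lborel) = (\<integral>\<^sup>+x. f (Complex x y) \<partial>lborel)" for y
    using nn_integral_real_affine[of "\<lambda>x. f (Complex x y)" 1 "a * y"] by simp
  then show "(\<integral>\<^sup>+w. f (shear_Re a w) \<partial>lborel) = (\<integral>\<^sup>+w. f w \<partial>lborel)"
    by (simp add: nn_integral_lborel_complex(1) shear_Re_def add.commute)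
qed simp

lemma distr_lborel_shear_Im: "distr lborel lborel (shear_Im a) = lborel"
proof (rule distr_eq_self_if_nn_integral_invariant)
  fix f :: "complex \<Rightarrow> ennreal" assume [measurable]: "f \<in> borel_measurable lborel"
  have "(\<integral>\<^sup>+y. f (Complex x (a * x + 1 * y)) \<partial>lborel) = (\<integral>\<^sup>+y. f (Complex x y) \<partial>lborel)" for x
    using nn_integral_real_affine[of "\<lambda>y. f (Complex x y)" 1 "a * x"] by simp
  then show "(\<integral>\<^sup>+w. f (shear_Im a w) \<partial>lborel) = (\<integral>\<^sup>+w. f w \<partial>lborel)"
    by (simp add: nn_integral_lborel_complex(2) shear_Im_def add.commute)
qed simp

text \<open>Paeth's decomposition of a rotation into three shears, each of which preserves
  Lebesgue measure by Fubini's theorem.\<close>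

lemma mult_unit_eq_shears:
  fixes u :: complex
  assumes "norm u = 1" and "u \<noteq> -1"
  defines "t \<equiv> Im u / (1 + Re u)"
  shows "(*) u = shear_Re (- t) \<circ> shear_Im (Im u) \<circ> shear_Re (- t)"
proof
  fix w :: complex
  have unit: "(Re u)\<^sup>2 + (Im u)\<^sup>2 = 1"
    using assms(1) by (simp add: cmod_def)
  have "1 + Re u \<noteq> 0"
  proof
    assume "1 + Re u = 0"
    then have "Re u = -1" by simp
    moreover from unit this have "Im u = 0" by simp
    ultimately show False using assms(2) by (simp add: complex_eq_iff)
  qed
  then have tu: "t * (1 + Re u) = Im u" by (simp add: t_def)
  have "t * Im u * (1 + Re u) = (1 - Re u) * (1 + Re u)"
    using unit by (simp add: tu[symmetric] algebra_simps power2_eq_square)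
  then have Re_u: "Re u = 1 - t * Im u"
    using \<open>1 + Re u \<noteq> 0\<close> by simp
  have "Im u * (1 + t * t) = 2 * t"
    using tu by (simp add: Re_u algebra_simps)
  then have "Im u * (1 + t * t) * Im w = 2 * t * Im w"
    by simp
  then show "u * w = (shear_Re (- t) \<circ> shear_Im (Im u) \<circ> shear_Re (- t)) w"
    by (simp add: shear_Re_def shear_Im_def complex_eq_iff Re_u algebra_simps)
qed

lemma distr_lborel_mult_unit:
  fixes u :: complex
  assumes "norm u = 1"
  shows "distr lborel lborel ((*) u) = lborel"
proof -
  have shears: "distr lborel lborel ((*) v) = lborel" if "norm v = 1" "v \<noteq> -1" for v :: complex
  proof -
    define t where "t = Im v / (1 + Re v)"
    have "distr lborel lborel ((*) v) =
        distr (distr (distr lborel lborel (shear_Re (- t))) lborel (shear_Im (Im v))) lborel (shear_Re (- t))"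
      unfolding mult_unit_eq_shears[OF that] t_def[symmetric]
      by (simp add: distr_distr comp_assoc)
    then show ?thesis
      by (simp add: distr_lborel_shear_Re distr_lborel_shear_Im)
  qed
  show ?thesis
  proof (cases "u = -1")
    case True
    have "(*) u = (*) \<i> \<circ> (*) \<i>"
      by (simp add: True fun_eq_iff)
    then have "distr lborel lborel ((*) u) = distr (distr lborel lborel ((*) \<i>)) lborel ((*) \<i>)"
      by (simp add: distr_distr)
    then show ?thesis
      by (simp add: shears complex_eq_iff)
  qed (use assms shears in simp)
qed

lemma integral_lborel_mult_unit:
  fixes f :: "complex \<Rightarrow> 'a::{banach, second_countable_topology}"
  assumes [measurable]: "f \<in> borel_measurable borel" and "norm u = 1"
  shows "(\<integral>w. f (u * w) \<partial>lborel) = (\<integral>w. f w \<partial>lborel)"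
  by (subst (2) distr_lborel_mult_unit[OF \<open>norm u = 1\<close>, symmetric]) (simp add: integral_distr)

lemma integral_cnj_pow_mult_pow_eq_0:
  fixes q :: "complex \<Rightarrow> complex" and k m :: nat
  assumes [measurable]: "q \<in> borel_measurable borel"
    and radial: "\<And>u w. norm u = 1 \<Longrightarrow> q (u * w) = q w"
    and "k \<noteq> m"
  shows "(\<integral>w. cnj w ^ k * w ^ m * q w \<partial>lborel) = 0"
proof -
  define J where "J = (\<integral>w. cnj w ^ k * w ^ m * q w \<partial>lborel)"
  define \<theta> where "\<theta> = pi / (real m - real k)"
  define u where "u = cis \<theta>"
  have "cnj u ^ k * u ^ m = cis ((real m - real k) * \<theta>)"
    unfolding u_def by (simp only: cis_cnj Complex.DeMoivre cis_mult) (simp add: algebra_simps)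
  also have "(real m - real k) * \<theta> = pi"
    using \<open>k \<noteq> m\<close> by (simp add: \<theta>_def)
  also have "cis pi = -1"
    by simp
  finally have u_power: "cnj u ^ k * u ^ m = -1" .
  have "norm u = 1" by (simp add: u_def)
  have "J = (\<integral>w. cnj (u * w) ^ k * (u * w) ^ m * q (u * w) \<partial>lborel)"
    unfolding J_def by (rule integral_lborel_mult_unit[symmetric]) (simp_all add: \<open>norm u = 1\<close>)
  also have "\<dots> = (\<integral>w. (cnj u ^ k * u ^ m) * (cnj w ^ k * w ^ m * q w) \<partial>lborel)"
    by (simp only: radial[OF \<open>norm u = 1\<close>] complex_cnj_mult power_mult_distrib) (simp add: mult_ac)
  also have "\<dots> = - J"
    unfolding u_power J_def by simp
  finally have "J = - J" .
  then show ?thesis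
    unfolding J_def[symmetric] by (simp add: eq_neg_iff_add_eq_0)
qed

section \<open>Radial integrals\<close>

lemma distr_lborel_norm_sq:
  "distr (lborel :: complex measure) borel (\<lambda>w. (cmod w)\<^sup>2) = density lborel (\<lambda>t. ennreal (pi * indicator {0..} t))"
    (is "?image = ?radial")
proof (rule measure_eqI_generator_eq[where E = "range atMost" and \<Omega> = UNIV and A = "\<lambda>i. {..real i}"])
  have sets_borel: "sets (borel :: real measure) = sigma_sets UNIV (range atMost)"
    by (subst borel_eq_atMost) (simp add: sets_measure_of)
  then show "sets ?image = sigma_sets UNIV (range atMost)" "sets ?radial = sigma_sets UNIV (range atMost)"
    by simp_all
  have image_atMost: "emeasure ?image {..a} = ennreal (pi * max a 0)" for a :: real
  proof (cases "a < 0")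
    case True
    then have "(\<lambda>w::complex. (cmod w)\<^sup>2) -` {..a} = {}"
      by (auto simp: not_le) (smt (verit) zero_le_power2)
    then show ?thesis using True by (subst emeasure_distr) auto
  next
    case False
    have "(cmod w)\<^sup>2 \<le> a \<longleftrightarrow> cmod w \<le> sqrt a" for w :: complex
      using sqrt_ge_absD[of "cmod w" a] real_le_rsqrt[of "cmod w" a] by auto
    then have "(\<lambda>w::complex. (cmod w)\<^sup>2) -` {..a} = cball 0 (sqrt a)"
      by (auto simp: dist_norm)
    moreover have "emeasure (lborel :: complex measure) (cball 0 (sqrt a)) = ennreal (pi * a)"
      using False by (subst emeasure_cball) (auto simp: unit_ball_vol_2)
    ultimately show ?thesis using False by (subst emeasure_distr) auto
  qed
  have radial_atMost: "emeasure ?radial {..a} = ennreal (pi * max a 0)" for a :: real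
  proof -
    have "emeasure ?radial {..a} = (\<integral>\<^sup>+t. ennreal pi * indicator {0..a} t \<partial>lborel)"
      by (subst emeasure_density) (auto intro!: nn_integral_cong simp: indicator_def ennreal_mult')
    also have "\<dots> = ennreal pi * emeasure lborel {0..a}"
      by (subst nn_integral_cmult_indicator) auto
    also have "\<dots> = ennreal (pi * max a 0)"
      by (auto simp: ennreal_mult'[symmetric] max_def emeasure_lborel_Icc_eq)
    finally show ?thesis .
  qed
  show "emeasure ?image X = emeasure ?radial X" if "X \<in> range atMost" for X
    using that image_atMost radial_atMost by auto
  show "emeasure ?image {..real i} \<noteq> \<infinity>" for i
    using image_atMost by simp
qed (auto simp: Int_stable_def real_arch_simple)

lemma integral_lborel_complex_radial:
  fixes f :: "real \<Rightarrow> 'b::{banach, second_countable_topology}"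
  assumes [measurable]: "f \<in> borel_measurable borel"
  shows "integrable (lborel :: complex measure) (\<lambda>w. f ((cmod w)\<^sup>2))
      \<longleftrightarrow> integrable lborel (\<lambda>t. (pi * indicator {0..} t) *\<^sub>R f t)"
    and "(\<integral>w. f ((cmod w)\<^sup>2) \<partial>(lborel :: complex measure)) = (\<integral>t. (pi * indicator {0..} t) *\<^sub>R f t \<partial>lborel)"
proof -
  have [measurable]: "(\<lambda>w::complex. (cmod w)\<^sup>2) \<in> borel_measurable lborel"
    by measurable
  show "integrable (lborel :: complex measure) (\<lambda>w. f ((cmod w)\<^sup>2))
      \<longleftrightarrow> integrable lborel (\<lambda>t. (pi * indicator {0..} t) *\<^sub>R f t)"
    using integrable_distr_eq[of "\<lambda>w. (cmod w)\<^sup>2" lborel borel f]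
    by (simp add: distr_lborel_norm_sq integrable_density)
  show "(\<integral>w. f ((cmod w)\<^sup>2) \<partial>(lborel :: complex measure)) = (\<integral>t. (pi * indicator {0..} t) *\<^sub>R f t \<partial>lborel)"
    using integral_distr[of "\<lambda>w. (cmod w)\<^sup>2" lborel borel f]
    by (simp add: distr_lborel_norm_sq integral_density)
qed

lemma nn_integral_powr_mult_exp_eq_Gamma:
  fixes r b :: real
  assumes "r > -1" and "b > 0"
  shows "(\<integral>\<^sup>+t. ennreal (indicator {0..} t * t powr r * exp (- b * t)) \<partial>lborel)
      = ennreal (Gamma (r + 1) / b powr (r + 1))"
proof -
  define f where "f t = ennreal (indicator {0..} t * t powr r / exp t)" for t :: real
  have [measurable]: "f \<in> borel_measurable borel"
    unfolding f_def by measurable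
  have rescale: "f (b * t) = ennreal (b powr r) * ennreal (indicator {0..} t * t powr r * exp (- b * t))" for t
  proof (cases "t \<ge> 0")
    case True
    then show ?thesis using \<open>b > 0\<close>
      by (auto simp: f_def indicator_def powr_mult ennreal_mult'[symmetric] exp_minus field_simps)
  next
    case False
    then have "\<not> 0 \<le> b * t" using \<open>b > 0\<close> by (simp add: zero_le_mult_iff)
    then show ?thesis using False by (simp add: f_def indicator_def)
  qed
  define I where "I = (\<integral>\<^sup>+t. ennreal (indicator {0..} t * t powr r * exp (- b * t)) \<partial>lborel)"
  have "ennreal (Gamma (r + 1)) = (\<integral>\<^sup>+t. f t \<partial>lborel)"
    using Gamma_conv_nn_integral_real[of "r + 1"] \<open>r > -1\<close> by (simp add: f_def)
  also have "\<dots> = ennreal b * (\<integral>\<^sup>+t. f (b * t) \<partial>lborel)"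
    using nn_integral_real_affine[of f b 0] \<open>b > 0\<close> by simp
  also have "(\<integral>\<^sup>+t. f (b * t) \<partial>lborel) = ennreal (b powr r) * I"
    unfolding rescale I_def by (rule nn_integral_cmult) measurable
  also have "ennreal b * (ennreal (b powr r) * I) = ennreal (b powr (r + 1)) * I"
    using \<open>b > 0\<close> by (simp add: powr_add ennreal_mult mult.assoc mult.left_commute)
  finally have Gamma_eq: "ennreal (Gamma (r + 1)) = ennreal (b powr (r + 1)) * I" .
  have "ennreal (Gamma (r + 1) / b powr (r + 1)) = ennreal (Gamma (r + 1)) * ennreal (1 / b powr (r + 1))"
    by (simp add: ennreal_mult''[symmetric])
  also have "\<dots> = I * (ennreal (b powr (r + 1)) * ennreal (1 / b powr (r + 1)))"
    by (simp add: Gamma_eq mult_ac)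
  also have "ennreal (b powr (r + 1)) * ennreal (1 / b powr (r + 1)) = 1"
    using \<open>b > 0\<close> by (simp add: ennreal_mult[symmetric])
  finally show ?thesis
    by (simp add: I_def)
qed

lemma integral_powr_mult_exp_eq_Gamma:
  fixes r b :: real
  assumes "r > -1" and "b > 0"
  shows "integrable lborel (\<lambda>t. indicator {0..} t * t powr r * exp (- b * t))"
    and "(\<integral>t. indicator {0..} t * t powr r * exp (- b * t) \<partial>lborel) = Gamma (r + 1) / b powr (r + 1)"
proof -
  have "Gamma (r + 1) > 0"
    using \<open>r > -1\<close> by (intro Gamma_real_pos) simp
  then have "integrable lborel (\<lambda>t. indicator {0..} t * t powr r * exp (- b * t)) \<and>
      (\<integral>t. indicator {0..} t * t powr r * exp (- b * t) \<partial>lborel) = Gamma (r + 1) / b powr (r + 1)"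
    using \<open>b > 0\<close> nn_integral_powr_mult_exp_eq_Gamma[OF assms]
    by (subst nn_integral_eq_integrable[symmetric]) (auto simp: indicator_def)
  then show "integrable lborel (\<lambda>t. indicator {0..} t * t powr r * exp (- b * t))"
    and "(\<integral>t. indicator {0..} t * t powr r * exp (- b * t) \<partial>lborel) = Gamma (r + 1) / b powr (r + 1)"
    by auto
qed

section \<open>The one-dimensional integral\<close>

text \<open>The weight \<open>|w|^(m(p-2))\<close>; the case \<open>m = 0\<close> is separated because \<open>0 powr 0 = 0\<close>.\<close>

definition radial_weight :: "real \<Rightarrow> nat \<Rightarrow> complex \<Rightarrow> real" where
  "radial_weight p m w = (if m = 0 then 1 else cmod w powr (real m * (p - 2)))"

definition radial_moment :: "real \<Rightarrow> nat \<Rightarrow> real \<Rightarrow> nat \<Rightarrow> complex \<Rightarrow> real" where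
  "radial_moment p m b k w = (cmod w) ^ (k + m) * exp (- b * (cmod w)\<^sup>2) * radial_weight p m w"

lemma measurable_radial_weight [measurable]: "radial_weight p m \<in> borel_measurable borel"
  unfolding radial_weight_def by measurable

lemma measurable_radial_moment [measurable]: "radial_moment p m b k \<in> borel_measurable borel"
  unfolding radial_moment_def by measurable

lemma radial_weight_nonneg: "radial_weight p m w \<ge> 0"
  by (simp add: radial_weight_def)

lemma radial_moment_nonneg: "radial_moment p m b k w \<ge> 0"
  by (simp add: radial_moment_def radial_weight_nonneg)

lemma radial_weight_mult_unit: "norm u = 1 \<Longrightarrow> radial_weight p m (u * w) = radial_weight p m w"
  by (simp add: radial_weight_def norm_mult)

lemma integral_radial_moment:
  fixes p b :: real and k m :: nat
  assumes "p > 1" and "b > 0"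
  defines "r \<equiv> (real k + real m * (p - 1)) / 2"
  shows "integrable lborel (radial_moment p m b k)"
    and "(\<integral>w. radial_moment p m b k w \<partial>lborel) = pi * Gamma (r + 1) / b powr (r + 1)"
proof -
  define g where "g t = sqrt t ^ (k + m) * exp (- b * t) *
      (if m = 0 then 1 else sqrt t powr (real m * (p - 2)))" for t :: real
  have [measurable]: "g \<in> borel_measurable borel"
    unfolding g_def by measurable
  have moment_eq: "radial_moment p m b k = (\<lambda>w. g ((cmod w)\<^sup>2))"
    by (simp add: fun_eq_iff radial_moment_def g_def radial_weight_def)
  have "real m * (p - 1) \<ge> 0"
    using \<open>p > 1\<close> by simp
  then have "r > -1"
    unfolding r_def by simp
  have pointwise: "(pi * indicator {0..} t) *\<^sub>R g t = pi * (indicator {0..} t * t powr r * exp (- b * t))"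
    if "t \<noteq> 0" for t
  proof (cases "t > 0")
    case True
    have "sqrt t ^ (k + m) = t powr ((real k + real m) / 2)"
      using True by (simp add: powr_realpow[symmetric] powr_half_sqrt[symmetric] powr_powr)
    moreover have "sqrt t powr (real m * (p - 2)) = t powr (real m * (p - 2) / 2)"
      using True by (simp add: powr_half_sqrt[symmetric] powr_powr)
    moreover have "r = (real k + real m) / 2 + (if m = 0 then 0 else real m * (p - 2) / 2)"
      unfolding r_def by (auto simp: field_simps)
    ultimately show ?thesis
      using True by (auto simp: g_def powr_add)
  qed (use that in \<open>simp add: indicator_def\<close>)
  have ae: "AE t in lborel. (pi * indicator {0..} t) *\<^sub>R g t = pi * (indicator {0..} t * t powr r * exp (- b * t))"
    by (rule AE_mp[OF AE_lborel_singleton[of 0] AE_I2]) (use pointwise in blast)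
  show "integrable lborel (radial_moment p m b k)"
    unfolding moment_eq integral_lborel_complex_radial(1)[OF \<open>g \<in> borel_measurable borel\<close>]
    using integral_powr_mult_exp_eq_Gamma(1)[OF \<open>r > -1\<close> \<open>b > 0\<close>]
    by (subst integrable_cong_AE[OF _ _ ae]) auto
  have "(\<integral>w. radial_moment p m b k w \<partial>lborel) = (\<integral>t. pi * (indicator {0..} t * t powr r * exp (- b * t)) \<partial>lborel)"
    unfolding moment_eq integral_lborel_complex_radial(2)[OF \<open>g \<in> borel_measurable borel\<close>]
    by (rule integral_cong_AE[OF _ _ ae]) auto
  then show "(\<integral>w. radial_moment p m b k w \<partial>lborel) = pi * Gamma (r + 1) / b powr (r + 1)"
    using integral_powr_mult_exp_eq_Gamma(2)[OF \<open>r > -1\<close> \<open>b > 0\<close>] by simp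
qed

lemma exp_mult_exp_neg_sq_le:
  fixes A s b :: real
  assumes "b > 0"
  shows "exp (A * s) * exp (- b * s\<^sup>2) \<le> exp (A\<^sup>2 / (2 * b)) * exp (- (b / 2) * s\<^sup>2)"
proof -
  have "0 \<le> (A - b * s)\<^sup>2 / (2 * b)"
    using assms by simp
  also have "(A - b * s)\<^sup>2 / (2 * b) = A\<^sup>2 / (2 * b) - A * s + (b / 2) * s\<^sup>2"
    using assms by (simp add: field_simps power2_eq_square)
  finally show ?thesis
    by (simp add: exp_add[symmetric])
qed

lemma summable_integral_radial_moment:
  fixes p b A :: real
  assumes "p > 1" and "b > 0" and "A \<ge> 0"
  shows "summable (\<lambda>k. A ^ k / fact k * (\<integral>w. radial_moment p m b k w \<partial>lborel))"
proof (rule summableI_nonneg_bounded)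
  show "0 \<le> A ^ k / fact k * (\<integral>w. radial_moment p m b k w \<partial>lborel)" for k
    using \<open>A \<ge> 0\<close> by (simp add: radial_moment_nonneg)
  define B where "B = exp (A\<^sup>2 / (2 * b))"
  fix n
  have "(\<Sum>k<n. A ^ k / fact k * (\<integral>w. radial_moment p m b k w \<partial>lborel))
      = (\<integral>w. (\<Sum>k<n. A ^ k / fact k * radial_moment p m b k w) \<partial>lborel)"
    using integral_radial_moment(1)[OF assms(1,2)] by (simp add: integral_sum)
  also have "\<dots> \<le> (\<integral>w. B * radial_moment p m (b / 2) 0 w \<partial>lborel)"
  proof (rule integral_mono)
    show "integrable lborel (\<lambda>w. \<Sum>k<n. A ^ k / fact k * radial_moment p m b k w)"
      using integral_radial_moment(1)[OF assms(1,2)] by simp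
    show "integrable lborel (\<lambda>w. B * radial_moment p m (b / 2) 0 w)"
      using integral_radial_moment(1)[of p "b / 2"] assms by simp
    fix w :: complex
    have "(\<Sum>k<n. A ^ k / fact k * radial_moment p m b k w)
        = (\<Sum>k<n. (A * cmod w) ^ k /\<^sub>R fact k) * radial_moment p m b 0 w"
      by (simp add: radial_moment_def sum_distrib_left sum_distrib_right power_add power_mult_distrib
          divide_inverse mult_ac)
    also have "\<dots> \<le> exp (A * cmod w) * radial_moment p m b 0 w"
      using sum_le_suminf[OF summable_exp_generic[of "A * cmod w"], of "{..<n}"] \<open>A \<ge> 0\<close>
      by (intro mult_right_mono) (auto simp: exp_def radial_moment_nonneg)
    also have "\<dots> = (exp (A * cmod w) * exp (- b * (cmod w)\<^sup>2)) * ((cmod w) ^ m * radial_weight p m w)"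
      by (simp add: radial_moment_def mult_ac)
    also have "\<dots> \<le> (B * exp (- (b / 2) * (cmod w)\<^sup>2)) * ((cmod w) ^ m * radial_weight p m w)"
      unfolding B_def
      by (rule mult_right_mono[OF exp_mult_exp_neg_sq_le[OF \<open>b > 0\<close>]]) (simp add: radial_weight_nonneg)
    also have "\<dots> = B * radial_moment p m (b / 2) 0 w"
      by (simp add: radial_moment_def mult_ac)
    finally show "(\<Sum>k<n. A ^ k / fact k * radial_moment p m b k w) \<le> B * radial_moment p m (b / 2) 0 w" .
  qed
  finally show "(\<Sum>k<n. A ^ k / fact k * (\<integral>w. radial_moment p m b k w \<partial>lborel))
      \<le> (\<integral>w. B * radial_moment p m (b / 2) 0 w \<partial>lborel)" .
qed

definition gauss_weight :: "real \<Rightarrow> nat \<Rightarrow> real \<Rightarrow> complex \<Rightarrow> complex" where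
  "gauss_weight p m b w = complex_of_real (exp (- b * (cmod w)\<^sup>2) * radial_weight p m w)"

lemma measurable_gauss_weight [measurable]: "gauss_weight p m b \<in> borel_measurable borel"
  unfolding gauss_weight_def by measurable

lemma gauss_weight_mult_unit: "norm u = 1 \<Longrightarrow> gauss_weight p m b (u * w) = gauss_weight p m b w"
  by (simp add: gauss_weight_def radial_weight_mult_unit norm_mult)

lemma integral_exp_cnj_gauss_weight_expansion:
  fixes c :: complex and m :: nat
  assumes "p > 1" and "b > 0"
  defines "F \<equiv> \<lambda>w. exp (c * cnj w) * gauss_weight p m b w * w ^ m"
  shows "integrable lborel F"
    and "(\<integral>w. F w \<partial>lborel) = (\<Sum>k. c ^ k / fact k * (\<integral>w. cnj w ^ k * w ^ m * gauss_weight p m b w \<partial>lborel))"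
proof -
  define f where "f k w = c ^ k / fact k * (cnj w ^ k * w ^ m * gauss_weight p m b w)" for k w
  have [measurable]: "f k \<in> borel_measurable borel" for k
    unfolding f_def by measurable
  have norm_f: "norm (f k w) = cmod c ^ k / fact k * radial_moment p m b k w" for k w
    by (simp add: f_def radial_moment_def gauss_weight_def norm_mult norm_divide norm_power
        radial_weight_nonneg power_add)
  have F_eq: "F w = (\<Sum>k. f k w)" for w
  proof -
    have "(\<lambda>k. (c * cnj w) ^ k /\<^sub>R fact k * (gauss_weight p m b w * w ^ m)) sums F w"
      unfolding F_def mult.assoc by (rule sums_mult2[OF exp_converges])
    then show ?thesis
      by (simp add: sums_iff f_def scaleR_conv_of_real divide_inverse power_mult_distrib mult_ac)
  qed
  have integrable_f: "integrable lborel (f k)" for k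
  proof (rule Bochner_Integration.integrable_bound)
    show "integrable lborel (\<lambda>w. cmod c ^ k / fact k * radial_moment p m b k w)"
      using integral_radial_moment(1)[OF assms(1,2)] by simp
    show "AE w in lborel. norm (f k w) \<le> norm (cmod c ^ k / fact k * radial_moment p m b k w)"
      by (simp add: norm_f radial_moment_nonneg)
  qed measurable
  have summable_norm: "summable (\<lambda>k. norm (f k w))" for w
  proof -
    have "summable (\<lambda>k. (cmod c * cmod w) ^ k /\<^sub>R fact k * radial_moment p m b 0 w)"
      by (rule summable_mult2[OF summable_exp_generic])
    then show ?thesis
      by (simp add: norm_f radial_moment_def power_add power_mult_distrib divide_inverse mult_ac)
  qed
  have summable_integral: "summable (\<lambda>k. \<integral>w. norm (f k w) \<partial>lborel)"
    using summable_integral_radial_moment[OF assms(1,2), of "cmod c" m] by (simp add: norm_f)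
  show "integrable lborel F"
    unfolding F_eq by (rule integrable_suminf[OF integrable_f _ summable_integral]) (simp add: summable_norm)
  have "(\<integral>w. F w \<partial>lborel) = (\<Sum>k. \<integral>w. f k w \<partial>lborel)"
    unfolding F_eq by (rule integral_suminf[OF integrable_f _ summable_integral]) (simp add: summable_norm)
  then show "(\<integral>w. F w \<partial>lborel) = (\<Sum>k. c ^ k / fact k * (\<integral>w. cnj w ^ k * w ^ m * gauss_weight p m b w \<partial>lborel))"
    by (simp add: f_def)
qed

lemma integral_exp_cnj_gauss_weight:
  fixes c :: complex and m :: nat
  assumes "p > 1" and "b > 0"
  shows "(\<integral>w. exp (c * cnj w) * gauss_weight p m b w * w ^ m \<partial>lborel)
      = complex_of_real (pi * Gamma (real m * p / 2 + 1) / b powr (real m * p / 2 + 1) / fact m) * c ^ m"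
proof -
  have diagonal: "cnj w ^ m * w ^ m * gauss_weight p m b w = complex_of_real (radial_moment p m b m w)" for w
  proof -
    have "cnj w * w = complex_of_real ((cmod w)\<^sup>2)"
      by (metis complex_norm_square mult.commute of_real_power)
    then have "cnj w ^ m * w ^ m = complex_of_real ((cmod w)\<^sup>2) ^ m"
      by (simp flip: power_mult_distrib)
    then show ?thesis
      by (simp add: gauss_weight_def radial_moment_def power2_eq_square power_mult_distrib power_add mult_ac)
  qed
  have "(\<integral>w. cnj w ^ m * w ^ m * gauss_weight p m b w \<partial>lborel)
      = complex_of_real (pi * Gamma (real m * p / 2 + 1) / b powr (real m * p / 2 + 1))"
  proof -
    have r: "(real m + real m * (p - 1)) / 2 = real m * p / 2"
      by (simp add: algebra_simps)
    show ?thesis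
      unfolding diagonal integral_complex_of_real integral_radial_moment(2)[OF assms, of m m] r ..
  qed
  moreover have "(\<integral>w. cnj w ^ k * w ^ m * gauss_weight p m b w \<partial>lborel) = 0" if "k \<noteq> m" for k
    using that by (intro integral_cnj_pow_mult_pow_eq_0) (simp_all add: gauss_weight_mult_unit)
  ultimately have terms: "(\<lambda>k. c ^ k / fact k * (\<integral>w. cnj w ^ k * w ^ m * gauss_weight p m b w \<partial>lborel))
      = (\<lambda>k. if k = m then
          complex_of_real (pi * Gamma (real m * p / 2 + 1) / b powr (real m * p / 2 + 1) / fact m) * c ^ m
          else 0)"
    by (auto simp: fun_eq_iff)
  show ?thesis
    unfolding integral_exp_cnj_gauss_weight_expansion(2)[OF assms] terms
    by (rule sums_unique[symmetric]) (rule sums_single)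
qed

section \<open>Integrals of products over the coordinates of \<open>'a^'n\<close>\<close>

lemma measurable_vec_nth [measurable]:
  "(\<lambda>w::'a::euclidean_space ^ 'n::finite. w $ k) \<in> borel_measurable borel"
  by (intro borel_measurable_continuous_onI bounded_linear.continuous_on[OF bounded_linear_vec_nth continuous_on_id])

lemma measurable_vec_lambda_PiM:
  "(\<lambda>f. \<chi> i. f i) \<in> (\<Pi>\<^sub>M i\<in>UNIV. (lborel :: 'a::euclidean_space measure)) \<rightarrow>\<^sub>M (borel :: ('a ^ 'n::finite) measure)"
proof -
  have "bounded_linear (axis i :: 'a \<Rightarrow> 'a ^ 'n)" for i
    by (simp add: linear_conv_bounded_linear[symmetric] linearI axis_def vec_eq_iff)
  then have [measurable]: "(axis i :: 'a \<Rightarrow> 'a ^ 'n) \<in> borel_measurable borel" for i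
    by (intro borel_measurable_continuous_onI bounded_linear.continuous_on[OF _ continuous_on_id])
  have "(\<lambda>f. \<chi> i. f i) = (\<lambda>f. \<Sum>i\<in>UNIV. axis i (f i) :: 'a ^ 'n)"
    by (simp add: fun_eq_iff vec_eq_iff axis_def sum.delta)
  also have "\<dots> \<in> (\<Pi>\<^sub>M i\<in>UNIV. (lborel :: 'a measure)) \<rightarrow>\<^sub>M borel"
    by measurable
  finally show ?thesis .
qed

lemma lborel_vec_eq_distr_PiM:
  "(lborel :: ('a::euclidean_space ^ 'n::finite) measure) = distr (\<Pi>\<^sub>M i\<in>UNIV. lborel) borel (\<lambda>f. \<chi> i. f i)"
proof (rule lborel_eqI)
  interpret product_sigma_finite "\<lambda>_::'n. lborel :: 'a measure"
    by (intro product_sigma_finite.intro sigma_finite_lborel)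
  fix l u :: "'a ^ 'n"
  assume le: "\<And>b. b \<in> Basis \<Longrightarrow> l \<bullet> b \<le> u \<bullet> b"
  have le': "l $ i \<bullet> c \<le> u $ i \<bullet> c" if "c \<in> Basis" for i c
    using le[of "axis i c"] that by (auto simp: Basis_vec_def inner_axis)
  have box: "(\<lambda>f. \<chi> i. f i) -` box l u \<inter> space (\<Pi>\<^sub>M i\<in>UNIV. lborel :: 'a measure)
      = (\<Pi>\<^sub>E i\<in>UNIV. box (l $ i) (u $ i))"
    by (auto simp: mem_box Basis_vec_def inner_axis space_PiM PiE_def Pi_def)
  have Basis_vec: "(Basis :: ('a ^ 'n) set) = (\<lambda>(i, c). axis i c) ` (UNIV \<times> Basis)"
    by (auto simp: Basis_vec_def)
  have inj: "inj_on (\<lambda>(i, c). axis i c :: 'a ^ 'n) (UNIV \<times> Basis)"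
    by (auto simp: inj_on_def axis_eq_axis nonzero_Basis)
  have "emeasure (distr (\<Pi>\<^sub>M i\<in>UNIV. lborel) borel (\<lambda>f. \<chi> i. f i)) (box l u)
      = (\<Prod>i\<in>UNIV. emeasure lborel (box (l $ i) (u $ i)))"
    by (simp add: emeasure_distr measurable_vec_lambda_PiM box emeasure_PiM)
  also have "\<dots> = ennreal (\<Prod>i\<in>UNIV. \<Prod>c\<in>Basis. (u $ i - l $ i) \<bullet> c)"
    using le' by (simp add: emeasure_lborel_box prod_ennreal prod_nonneg inner_diff_left)
  also have "(\<Prod>i\<in>UNIV. \<Prod>c\<in>Basis. (u $ i - l $ i) \<bullet> c) = (\<Prod>b\<in>Basis. (u - l) \<bullet> b)"
  proof -
    have "(\<Prod>b\<in>Basis. (u - l) \<bullet> b) = (\<Prod>(i, c)\<in>UNIV \<times> Basis. (u - l) \<bullet> axis i c)"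
      unfolding Basis_vec by (subst prod.reindex[OF inj]) (simp add: comp_def case_prod_beta)
    also have "\<dots> = (\<Prod>i\<in>UNIV. \<Prod>c\<in>Basis. (u $ i - l $ i) \<bullet> c)"
      by (simp add: prod.cartesian_product[symmetric] inner_axis)
    finally show ?thesis ..
  qed
  finally show "emeasure (distr (\<Pi>\<^sub>M i\<in>UNIV. lborel) borel (\<lambda>f. \<chi> i. f i)) (box l u)
      = (\<Prod>b\<in>Basis. (u - l) \<bullet> b)" .
qed simp

lemma integral_lborel_vec_prod:
  fixes F :: "'n::finite \<Rightarrow> 'a::euclidean_space \<Rightarrow> 'b::{real_normed_field, banach, second_countable_topology}"
  assumes "\<And>k. integrable lborel (F k)"
  shows "(\<integral>w. (\<Prod>k\<in>UNIV. F k (w $ k)) \<partial>(lborel :: ('a ^ 'n) measure)) = (\<Prod>k\<in>UNIV. \<integral>x. F k x \<partial>lborel)"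
proof -
  interpret product_sigma_finite "\<lambda>_::'n. lborel :: 'a measure"
    by (intro product_sigma_finite.intro sigma_finite_lborel)
  have [measurable]: "F k \<in> borel_measurable borel" for k
    using assms by (simp add: borel_measurable_integrable)
  have "(\<integral>w. (\<Prod>k\<in>UNIV. F k (w $ k)) \<partial>(lborel :: ('a ^ 'n) measure))
      = (\<integral>f. (\<Prod>k\<in>UNIV. F k (f k)) \<partial>(\<Pi>\<^sub>M i\<in>UNIV. lborel))"
    by (subst lborel_vec_eq_distr_PiM) (simp add: integral_distr measurable_vec_lambda_PiM)
  also have "\<dots> = (\<Prod>k\<in>UNIV. \<integral>x. F k x \<partial>lborel)"
    by (rule product_integral_prod) (auto intro: assms)
  finally show ?thesis .
qed

section \<open>The eigenvalue\<close>

lemma Gop_psi_eq_prod: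
  fixes \<alpha> p :: real and j :: "'n::finite \<Rightarrow> nat"
  assumes "\<alpha> > 0"
  defines "c \<equiv> sqrt (\<alpha> ^ mabs j / real (mfact j))"
  shows "Gop p \<alpha> (psi j \<alpha>) w = complex_of_real (c powr (p - 1) * exp (- \<alpha> * (p / 2 - 1) * (norm w)\<^sup>2)) *
      (\<Prod>k\<in>UNIV. complex_of_real (radial_weight p (j k) (w $ k)) * (w $ k) ^ j k)"
proof -
  have "real (mfact j) > 0"
    by (simp add: mfact_def prod_pos)
  then have "c > 0"
    unfolding c_def using assms by simp
  have psi: "psi j \<alpha> w = complex_of_real c * mpow w j"
    by (simp add: psi_def c_def)
  show ?thesis
  proof (cases "mpow w j = 0")
    case True
    then obtain k where "(w $ k) ^ j k = 0"
      by (auto simp: mpow_def)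
    then have "complex_of_real (radial_weight p (j k) (w $ k)) * (w $ k) ^ j k = 0"
      by simp
    then show ?thesis
      using True by (auto simp: Gop_def psi prod_zero_iff)
  next
    case False
    then have nonzero: "(w $ k) ^ j k \<noteq> 0" for k
      by (auto simp: mpow_def)
    have weight: "(cmod (w $ k) ^ j k) powr (p - 2) = radial_weight p (j k) (w $ k)" for k
      using nonzero[of k] by (cases "j k = 0") (simp_all add: radial_weight_def powr_realpow[symmetric] powr_powr)
    have norm_psi: "norm (complex_of_real c * mpow w j) powr (p - 2) = c powr (p - 2) * (\<Prod>k\<in>UNIV. radial_weight p (j k) (w $ k))"
      using \<open>c > 0\<close> by (simp add: mpow_def norm_mult norm_power powr_mult prod_norm[symmetric]
          prod_powr_distrib weight)
    have "Gop p \<alpha> (psi j \<alpha>) w = complex_of_real (c powr (p - 2) * c * exp (- \<alpha> * (p / 2 - 1) * (norm w)\<^sup>2))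
        * ((\<Prod>k\<in>UNIV. complex_of_real (radial_weight p (j k) (w $ k))) * mpow w j)"
      using False \<open>c > 0\<close> by (simp add: Gop_def psi norm_psi of_real_prod mult_ac)
    also have "c powr (p - 2) * c = c powr (p - 1)"
      using \<open>c > 0\<close> by (simp add: powr_mult_base powr_add[symmetric] mult.commute[of _ c])
    finally show ?thesis
      by (simp add: mpow_def prod.distrib)
  qed
qed

text \<open>One coordinate factor of the integrand of \<open>P G(\<psi>)(z)\<close>, Gaussian density included.\<close>

definition coordinate_integrand :: "real \<Rightarrow> real \<Rightarrow> nat \<Rightarrow> complex \<Rightarrow> complex \<Rightarrow> complex" where
  "coordinate_integrand \<alpha> p m \<zeta> \<omega> =
     complex_of_real (\<alpha> / pi) * (exp (\<alpha> * \<zeta> * cnj \<omega>) * gauss_weight p m (\<alpha> * p / 2) \<omega> * \<omega> ^ m)"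

lemma Pop_integrand_Gop_psi_eq_prod:
  fixes \<alpha> p :: real and j :: "'n::finite \<Rightarrow> nat" and z w :: "complex ^ 'n"
  assumes "\<alpha> > 0"
  defines "c \<equiv> sqrt (\<alpha> ^ mabs j / real (mfact j))"
  shows "((\<alpha> / pi) ^ CARD('n) * exp (- \<alpha> * (norm w)\<^sup>2)) *\<^sub>R (exp (\<alpha> * cinner z w) * Gop p \<alpha> (psi j \<alpha>) w)
      = complex_of_real (c powr (p - 1)) * (\<Prod>k\<in>UNIV. coordinate_integrand \<alpha> p (j k) (z $ k) (w $ k))"
proof -
  have norm_sq: "(norm w)\<^sup>2 = (\<Sum>k\<in>UNIV. (cmod (w $ k))\<^sup>2)"
    by (simp add: norm_vec_def L2_set_def sum_nonneg)
  have exp_cinner: "exp (\<alpha> * cinner z w) = (\<Prod>k\<in>UNIV. exp (\<alpha> * (z $ k) * cnj (w $ k)))"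
    by (simp add: cinner_def sum_distrib_left exp_sum mult_ac)
  have gauss: "exp (- \<alpha> * (norm w)\<^sup>2) * exp (- \<alpha> * (p / 2 - 1) * (norm w)\<^sup>2)
      = (\<Prod>k\<in>UNIV. exp (- (\<alpha> * p / 2) * (cmod (w $ k))\<^sup>2))"
  proof -
    have "exp (- \<alpha> * (norm w)\<^sup>2) * exp (- \<alpha> * (p / 2 - 1) * (norm w)\<^sup>2) = exp (- (\<alpha> * p / 2) * (norm w)\<^sup>2)"
      by (simp add: exp_add[symmetric] algebra_simps)
    then show ?thesis
      by (simp add: norm_sq sum_distrib_left exp_sum)
  qed
  have integrands: "(\<Prod>k\<in>UNIV. coordinate_integrand \<alpha> p (j k) (z $ k) (w $ k))
      = complex_of_real ((\<alpha> / pi) ^ CARD('n)) * exp (\<alpha> * cinner z w)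
        * complex_of_real (\<Prod>k\<in>UNIV. exp (- (\<alpha> * p / 2) * (cmod (w $ k))\<^sup>2))
        * (\<Prod>k\<in>UNIV. complex_of_real (radial_weight p (j k) (w $ k)) * (w $ k) ^ j k)"
    unfolding exp_cinner
    by (simp add: coordinate_integrand_def gauss_weight_def prod.distrib mult_ac
        del: of_real_divide)
  show ?thesis
    unfolding Gop_psi_eq_prod[OF assms(1), of p j w, folded c_def] integrands gauss[symmetric]
    by (simp add: scaleR_conv_of_real mult_ac)
qed

lemma integral_coordinate_integrand:
  fixes \<alpha> p :: real and m :: nat and \<zeta> :: complex
  assumes "\<alpha> > 0" and "p > 1"
  shows "integrable lborel (coordinate_integrand \<alpha> p m \<zeta>)"
    and "(\<integral>\<omega>. coordinate_integrand \<alpha> p m \<zeta> \<omega> \<partial>lborel) = complex_of_real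
      (Gamma (real m * p / 2 + 1) * (2 / p) powr (real m * p / 2 + 1) * \<alpha> powr (real m * (1 - p / 2)) / fact m)
      * \<zeta> ^ m"
proof -
  define r where "r = real m * p / 2 + 1"
  have "\<alpha> * p / 2 > 0"
    using assms by simp
  note expansion = integral_exp_cnj_gauss_weight_expansion[OF \<open>p > 1\<close> this, of "\<alpha> * \<zeta>" m]
  show "integrable lborel (coordinate_integrand \<alpha> p m \<zeta>)"
    unfolding coordinate_integrand_def using expansion(1) by simp
  have "(\<alpha> * p / 2) powr r = \<alpha> powr r * (p / 2) powr r"
    using assms by (simp add: powr_mult[symmetric])
  then have "\<alpha> / pi * (pi * Gamma r / (\<alpha> * p / 2) powr r / fact m) * \<alpha> ^ m
      = Gamma r * \<alpha> powr (real m + 1 - r) / (p / 2) powr r / fact m"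
    using \<open>\<alpha> > 0\<close> by (simp add: powr_diff powr_add powr_realpow field_simps)
  also have "\<dots> = Gamma r * (2 / p) powr r * \<alpha> powr (real m * (1 - p / 2)) / fact m"
    using \<open>p > 1\<close> by (simp add: r_def powr_divide algebra_simps)
  finally have coefficient: "\<alpha> / pi * (pi * Gamma r / (\<alpha> * p / 2) powr r / fact m) * \<alpha> ^ m
      = Gamma r * (2 / p) powr r * \<alpha> powr (real m * (1 - p / 2)) / fact m" .
  show "(\<integral>\<omega>. coordinate_integrand \<alpha> p m \<zeta> \<omega> \<partial>lborel) = complex_of_real
      (Gamma (real m * p / 2 + 1) * (2 / p) powr (real m * p / 2 + 1) * \<alpha> powr (real m * (1 - p / 2)) / fact m)
      * \<zeta> ^ m"
    unfolding coordinate_integrand_def integral_mult_right_zero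
      integral_exp_cnj_gauss_weight[OF \<open>p > 1\<close> \<open>\<alpha> * p / 2 > 0\<close>]
    by (simp add: coefficient[unfolded r_def, symmetric] power_mult_distrib)
qed

lemma Pop_Gop_psi_eq_prod:
  fixes \<alpha> p :: real and j :: "'n::finite \<Rightarrow> nat"
  assumes "\<alpha> > 0" and "p > 1"
  defines "c \<equiv> sqrt (\<alpha> ^ mabs j / real (mfact j))"
  shows "Pop \<alpha> (Gop p \<alpha> (psi j \<alpha>)) z
      = complex_of_real (c powr (p - 1)) * (\<Prod>k\<in>UNIV. \<integral>\<omega>. coordinate_integrand \<alpha> p (j k) (z $ k) \<omega> \<partial>lborel)"
proof -
  have [measurable]: "(\<lambda>w. exp (\<alpha> * cinner z w) * Gop p \<alpha> (psi j \<alpha>) w) \<in> borel_measurable borel"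
    unfolding Gop_def psi_def mpow_def cinner_def by measurable
  have "Pop \<alpha> (Gop p \<alpha> (psi j \<alpha>)) z = (\<integral>w. ((\<alpha> / pi) ^ CARD('n) * exp (- \<alpha> * (norm w)\<^sup>2))
      *\<^sub>R (exp (\<alpha> * cinner z w) * Gop p \<alpha> (psi j \<alpha>) w) \<partial>lborel)"
    unfolding Pop_def gauss_measure_def using \<open>\<alpha> > 0\<close> by (simp add: integral_density)
  also have "\<dots> = complex_of_real (c powr (p - 1))
      * (\<integral>w. (\<Prod>k\<in>UNIV. coordinate_integrand \<alpha> p (j k) (z $ k) (w $ k)) \<partial>lborel)"
    unfolding Pop_integrand_Gop_psi_eq_prod[OF \<open>\<alpha> > 0\<close>] c_def by simp
  also have "(\<integral>w. (\<Prod>k\<in>UNIV. coordinate_integrand \<alpha> p (j k) (z $ k) (w $ k)) \<partial>lborel)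
      = (\<Prod>k\<in>UNIV. \<integral>\<omega>. coordinate_integrand \<alpha> p (j k) (z $ k) \<omega> \<partial>lborel)"
    by (rule integral_lborel_vec_prod) (rule integral_coordinate_integrand(1)[OF assms(1,2)])
  finally show ?thesis .
qed

lemma prod_coefficients_multiindex:
  fixes t \<alpha> :: real and j :: "'n::finite \<Rightarrow> nat" and g :: "'n \<Rightarrow> real"
  assumes "t > 0" and "\<alpha> > 0"
  shows "(\<Prod>k\<in>UNIV. g k * t powr (real (j k) * s + 1) * \<alpha> powr (real (j k) * q) / fact (j k))
      = (\<Prod>k\<in>UNIV. g k) * t powr (real (mabs j) * s + real CARD('n)) * \<alpha> powr (real (mabs j) * q) / real (mfact j)"
proof -
  have "(\<Prod>k\<in>UNIV. t powr (real (j k) * s + 1)) = t powr (real (mabs j) * s + real CARD('n))"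
    using \<open>t > 0\<close> by (simp add: powr_sum[symmetric] mabs_def sum.distrib sum_distrib_right)
  moreover have "(\<Prod>k\<in>UNIV. \<alpha> powr (real (j k) * q)) = \<alpha> powr (real (mabs j) * q)"
    using \<open>\<alpha> > 0\<close> by (simp add: powr_sum[symmetric] mabs_def sum_distrib_right)
  ultimately show ?thesis
    by (simp add: prod.distrib prod_dividef mfact_def)
qed

lemma sqrt_quotient_powr_identity:
  fixes x J p :: real
  assumes "x > 0" and "J > 0"
  shows "sqrt (x / J) powr (p - 1) * x powr (1 - p / 2) / J = sqrt (x / J) / sqrt J powr p"
proof -
  have sqrt_eq: "sqrt y = y powr (1 / 2)" if "y > 0" for y :: real
    using that by (simp add: powr_half_sqrt)
  have "sqrt (x / J) powr (p - 1) * x powr (1 - p / 2) / J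
      = x powr ((p - 1) / 2 + (1 - p / 2)) / J powr ((p - 1) / 2 + 1)"
    using assms by (simp add: sqrt_eq powr_divide powr_powr powr_add)
  also have "\<dots> = x powr (1 / 2) / J powr (1 / 2 + p / 2)"
    by (simp add: field_simps)
  also have "\<dots> = sqrt (x / J) / sqrt J powr p"
    using assms by (simp add: sqrt_eq powr_divide powr_powr powr_add)
  finally show ?thesis .
qed

theorem lemma4p3:
  fixes \<alpha> p :: real and j :: "'n::finite \<Rightarrow> nat"
  assumes "\<alpha> > 0" and "1 < p"
  shows "Pop \<alpha> (Gop p \<alpha> (psi j \<alpha>)) =
    (\<lambda>z. complex_of_real ((2 / p) powr (real (mabs j) * p / 2 + real CARD('n))
        * (\<Prod>k\<in>UNIV. Gamma (real (j k) * p / 2 + 1)) / (sqrt (real (mfact j)) powr p))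
      * psi j \<alpha> z)"
proof
  fix z :: "complex ^ 'n"
  define c where "c = sqrt (\<alpha> ^ mabs j / real (mfact j))"
  define coef where "coef k = Gamma (real (j k) * p / 2 + 1) * (2 / p) powr (real (j k) * p / 2 + 1)
      * \<alpha> powr (real (j k) * (1 - p / 2)) / fact (j k)" for k
  have "real (mfact j) > 0"
    by (simp add: mfact_def prod_pos)
  have psi_z: "psi j \<alpha> z = complex_of_real c * mpow z j"
    by (simp add: psi_def c_def)
  have "Pop \<alpha> (Gop p \<alpha> (psi j \<alpha>)) z = complex_of_real (c powr (p - 1)) * (\<Prod>k\<in>UNIV. complex_of_real (coef k) * (z $ k) ^ j k)"
    unfolding Pop_Gop_psi_eq_prod[OF assms] integral_coordinate_integrand(2)[OF assms] coef_def c_def ..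
  also have "\<dots> = complex_of_real (c powr (p - 1) * prod coef UNIV) * mpow z j"
    by (simp add: mpow_def prod.distrib)
  also have "c powr (p - 1) * prod coef UNIV = c powr (p - 1) * (\<alpha> ^ mabs j) powr (1 - p / 2) / real (mfact j)
      * ((2 / p) powr (real (mabs j) * p / 2 + real CARD('n)) * (\<Prod>k\<in>UNIV. Gamma (real (j k) * p / 2 + 1)))"
    using prod_coefficients_multiindex[of "2 / p" \<alpha> "\<lambda>k. Gamma (real (j k) * p / 2 + 1)" j "p / 2" "1 - p / 2"] assms
    by (simp add: coef_def powr_powr powr_realpow[symmetric] mult_ac)
  also have "c powr (p - 1) * (\<alpha> ^ mabs j) powr (1 - p / 2) / real (mfact j) = c / sqrt (real (mfact j)) powr p"
    unfolding c_def using \<open>\<alpha> > 0\<close> \<open>real (mfact j) > 0\<close> by (rule sqrt_quotient_powr_identity[OF zero_less_power])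
  finally show "Pop \<alpha> (Gop p \<alpha> (psi j \<alpha>)) z = complex_of_real ((2 / p) powr (real (mabs j) * p / 2 + real CARD('n))
        * (\<Prod>k\<in>UNIV. Gamma (real (j k) * p / 2 + 1)) / (sqrt (real (mfact j)) powr p)) * psi j \<alpha> z"
    by (simp add: psi_z mult_ac)
qed

end
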